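(* The class $\mathrm{CEsp}$ is closed under the Cartesian (Hadamard) product: for nonnegative integers $a_\mu,b_\mu$ ($\mu\vdash n$), $$\Big(\sum_{\mu\vdash n}a_\mu\mathbf{C}_\mu\Big)\times\Big(\sum_{\mu\vdash n}b_\mu\mathbf{C}_\mu\Big)=\sum_{\mu\vdash n}\Big(\sum_{\alpha,\beta\vdash n}a_\alpha b_\beta\, b^\mu_{\alpha,\beta}\Big)\mathbf{C}_\mu,$$ with $b^\mu_{\alpha,\beta}\in\mathbb{N}$, so the product is again a nonnegative integer combination of the $\mathbf{C}_\mu$.
   Context: $\mathrm{CEsp}$ is the category whose objects are species $\sum_{\mu\vdash n}a_\mu\mathbf{C}_\mu$ with $a_\mu\in\mathbb{N}$ (disjoint unions of copies) and whose morphisms are natural transformations. $\mathbf{C}_\mu=X^n/\langle\sigma_\mu\rangle$, where $(X^n/H)[U]=\{\lambda H:\lambda:[n]\to U\text{ bijection}\}$ and $\sigma_\mu$ is the standard permutation of cycle type $\mu$ (cycles filled with $1,\ldots,n$ in increasing order). $(F\times G)[U]=F[U]\times G[U]$. $b^\mu_{\alpha,\beta}$ is the number of double cosets $\langle\sigma_\alpha\rangle\pi\langle\sigma_\beta\rangle$ in $S_n$ with $\langle\sigma_\alpha\rangle\cap\pi\langle\sigma_\beta\rangle\pi^{-1}$ conjugate to $\langle\sigma_\mu\rangle$; equivalently the coefficient of $\mathbf{C}_\mu(\mathbf{z})$ in the Kronecker product $\mathbf{C}_\alpha(\mathbf{z})\star\mathbf{C}_\beta(\mathbf{z})$ of cycle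 index series. *)

theory Defs
  imports "HOL-Combinatorics.Permutations" "HOL-Library.FuncSet"
begin

definition partitions :: "nat \<Rightarrow> nat list set" where
  "partitions n = {mu. sorted_wrt (\<ge>) mu \<and> (\<forall>m\<in>set mu. 0 < m) \<and> sum_list mu = n}"

text \<open>Standard permutation of cycle type mu on {1..n}: cycles (1 .. m1)(m1+1 .. m1+m2)...
  filled in increasing order; identity outside {1..n}.\<close>
fun std_perm_aux :: "nat \<Rightarrow> nat list \<Rightarrow> nat \<Rightarrow> nat" where
  "std_perm_aux off [] = id"
| "std_perm_aux off (m # ms) =
     (\<lambda>i. if off < i \<and> i \<le> off + m then (if i = off + m then off + 1 else i + 1)
          else std_perm_aux (off + m) ms i)"

definition std_perm :: "nat list \<Rightarrow> nat \<Rightarrow> nat" where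
  "std_perm mu = std_perm_aux 0 mu"

definition cyc_group :: "(nat \<Rightarrow> nat) \<Rightarrow> (nat \<Rightarrow> nat) set" where
  "cyc_group s = {s ^^ k | k. True}"

definition double_coset :: "(nat \<Rightarrow> nat) set \<Rightarrow> (nat \<Rightarrow> nat) \<Rightarrow> (nat \<Rightarrow> nat) set \<Rightarrow> (nat \<Rightarrow> nat) set" where
  "double_coset A p B = {a \<circ> p \<circ> b | a b. a \<in> A \<and> b \<in> B}"

definition conj_set :: "(nat \<Rightarrow> nat) \<Rightarrow> (nat \<Rightarrow> nat) set \<Rightarrow> (nat \<Rightarrow> nat) set" where
  "conj_set g B = {g \<circ> x \<circ> inv g | x. x \<in> B}"

definition conjugate_in_Sn :: "nat \<Rightarrow> (nat \<Rightarrow> nat) set \<Rightarrow> (nat \<Rightarrow> nat) set \<Rightarrow> bool" where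
  "conjugate_in_Sn n A B \<longleftrightarrow> (\<exists>g. g permutes {1..n} \<and> A = conj_set g B)"

definition bcoef :: "nat \<Rightarrow> nat list \<Rightarrow> nat list \<Rightarrow> nat list \<Rightarrow> nat" where
  "bcoef n mu alpha beta =
     card {D. \<exists>p. p permutes {1..n} \<and>
               D = double_coset (cyc_group (std_perm alpha)) p (cyc_group (std_perm beta)) \<and>
               conjugate_in_Sn n (cyc_group (std_perm alpha) \<inter> conj_set p (cyc_group (std_perm beta)))
                                 (cyc_group (std_perm mu))}"

text \<open>Structures of X^n/H on U: left cosets l H of bijections l : {1..n} \<rightarrow> U
  (functions taken extensional, i.e. undefined outside {1..n}).\<close>
definition bijs :: "nat \<Rightarrow> 'a set \<Rightarrow> (nat \<Rightarrow> 'a) set" where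
  "bijs n U = {l. bij_betw l {1..n} U \<and> l \<in> extensional {1..n}}"

definition quot_species :: "nat \<Rightarrow> (nat \<Rightarrow> nat) set \<Rightarrow> 'a set \<Rightarrow> (nat \<Rightarrow> 'a) set set" where
  "quot_species n H U = {(\<lambda>h. l \<circ> h) ` H | l. l \<in> bijs n U}"

definition quot_transport :: "nat \<Rightarrow> ('a \<Rightarrow> 'a) \<Rightarrow> (nat \<Rightarrow> 'a) set \<Rightarrow> (nat \<Rightarrow> 'a) set" where
  "quot_transport n s c = (\<lambda>l. restrict (s \<circ> l) {1..n}) ` c"

definition C_sp :: "nat \<Rightarrow> nat list \<Rightarrow> 'a set \<Rightarrow> (nat \<Rightarrow> 'a) set set" where
  "C_sp n mu U = quot_species n (cyc_group (std_perm mu)) U"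

text \<open>The species sum_{mu |- n} a_mu C_mu: a disjoint union of a_mu copies of C_mu.\<close>
definition CEsp :: "nat \<Rightarrow> (nat list \<Rightarrow> nat) \<Rightarrow> 'a set \<Rightarrow> (nat list \<times> nat \<times> (nat \<Rightarrow> 'a) set) set" where
  "CEsp n a U = {(mu, i, c). mu \<in> partitions n \<and> i < a mu \<and> c \<in> C_sp n mu U}"

definition CEsp_transport :: "nat \<Rightarrow> ('a \<Rightarrow> 'a) \<Rightarrow> nat list \<times> nat \<times> (nat \<Rightarrow> 'a) set
    \<Rightarrow> nat list \<times> nat \<times> (nat \<Rightarrow> 'a) set" where
  "CEsp_transport n s x = (case x of (mu, i, c) \<Rightarrow> (mu, i, quot_transport n s c))"

definition prod_species :: "('a set \<Rightarrow> 'b set) \<Rightarrow> ('a set \<Rightarrow> 'c set) \<Rightarrow> 'a set \<Rightarrow> ('b \<times> 'c) set" where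
  "prod_species F G U = F U \<times> G U"

definition prod_transport :: "(('a \<Rightarrow> 'a) \<Rightarrow> 'b \<Rightarrow> 'b) \<Rightarrow> (('a \<Rightarrow> 'a) \<Rightarrow> 'c \<Rightarrow> 'c)
    \<Rightarrow> ('a \<Rightarrow> 'a) \<Rightarrow> 'b \<times> 'c \<Rightarrow> 'b \<times> 'c" where
  "prod_transport trF trG s x = (trF s (fst x), trG s (snd x))"

definition species_iso :: "('a set \<Rightarrow> 'b set) \<Rightarrow> (('a \<Rightarrow> 'a) \<Rightarrow> 'b \<Rightarrow> 'b)
    \<Rightarrow> ('a set \<Rightarrow> 'c set) \<Rightarrow> (('a \<Rightarrow> 'a) \<Rightarrow> 'c \<Rightarrow> 'c) \<Rightarrow> bool" where
  "species_iso F trF G trG \<longleftrightarrow>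
     (\<exists>phi. (\<forall>U. finite U \<longrightarrow> bij_betw (phi U) (F U) (G U)) \<and>
            (\<forall>U V s. finite U \<and> bij_betw s U V \<longrightarrow>
                (\<forall>x\<in>F U. phi V (trF s x) = trG s (phi U x))))"

end

theory Submission
  imports Defs "HOL-Combinatorics.Cycles"
begin

text \<open>
  A pair of structures \<open>(l H, l' K)\<close> of \<open>X\<^sup>n/H \<times> X\<^sup>n/K\<close> determines the double coset
  \<open>H (l\<inverse> l') K\<close>, and over a fixed double coset \<open>H p K\<close> the labellings \<open>x \<in> l H\<close> with
  \<open>x p \<in> l' K\<close> form a left coset of \<open>H \<inter> p K p\<inverse>\<close>. Hence the product is the sum, over the double
  cosets, of the species \<open>X\<^sup>n/(H \<inter> p K p\<inverse>)\<close>. For \<open>H = \<langle>\<sigma>\<^sub>\<alpha>\<rangle>\<close> and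
  \<open>K = \<langle>\<sigma>\<^sub>\<beta>\<rangle>\<close> this intersection is a subgroup of a cyclic group, so it is
  generated by a power of \<open>\<sigma>\<^sub>\<alpha>\<close>, which is conjugate to some \<open>\<sigma>\<^sub>\<mu>\<close>; the
  partition \<open>\<mu>\<close> is unique since conjugate groups have the same multiset of orbit sizes, and
  conjugate subgroups give isomorphic species. Counting pairs of summands together with double cosets
  of each type gives the coefficients.
\<close>

definition block_cycle :: "nat \<Rightarrow> nat \<Rightarrow> nat \<Rightarrow> nat" where
  "block_cycle off m =
     (\<lambda>i. if off < i \<and> i \<le> off + m then (if i = off + m then off + 1 else i + 1) else i)"

lemma std_perm_aux_below: "i \<le> off \<Longrightarrow> std_perm_aux off ms i = i"
  by (induction ms arbitrary: off) auto

lemma std_perm_aux_greater: "off < i \<Longrightarrow> off < std_perm_aux off ms i"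
proof (induction ms arbitrary: off)
  case (Cons m ms)
  then show ?case using Cons.IH[of "off + m"] by (cases "i \<le> off + m") fastforce+
qed simp

lemma std_perm_aux_Cons:
  "std_perm_aux off (m # ms) = block_cycle off m \<circ> std_perm_aux (off + m) ms"
proof
  fix i
  show "std_perm_aux off (m # ms) i = (block_cycle off m \<circ> std_perm_aux (off + m) ms) i"
  proof (cases "off + m < i")
    case True
    then show ?thesis using std_perm_aux_greater[OF True, of ms] by (simp add: block_cycle_def)
  qed (simp add: std_perm_aux_below block_cycle_def)
qed

lemma block_cycle_permutes: "block_cycle off m permutes {off<..off + m}"
proof (rule bij_imp_permutes)
  have inj: "inj_on (block_cycle off m) {off<..off + m}"
    by (auto simp: inj_on_def block_cycle_def split: if_splits)
  moreover have "block_cycle off m ` {off<..off + m} \<subseteq> {off<..off + m}"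
    by (auto simp: block_cycle_def)
  ultimately show "bij_betw (block_cycle off m) {off<..off + m} {off<..off + m}"
    by (simp add: bij_betw_def endo_inj_surj)
qed (auto simp: block_cycle_def)

lemma std_perm_aux_permutes: "std_perm_aux off ms permutes {off<..off + sum_list ms}"
proof (induction ms arbitrary: off)
  case (Cons m ms)
  have "block_cycle off m permutes {off<..off + sum_list (m # ms)}"
    by (rule permutes_subset[OF block_cycle_permutes]) auto
  moreover have "std_perm_aux (off + m) ms permutes {off<..off + sum_list (m # ms)}"
    by (rule permutes_subset[OF Cons.IH]) auto
  ultimately show ?case unfolding std_perm_aux_Cons by (rule permutes_compose[rotated])
qed (simp add: permutes_id)

lemma std_perm_permutes: "mu \<in> partitions n \<Longrightarrow> std_perm mu permutes {1..n}"
  using std_perm_aux_permutes[of 0 mu] greaterThanAtMost_eq_atLeastAtMost_diff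
  by (simp add: std_perm_def partitions_def atLeastSucAtMost_greaterThanAtMost[symmetric])

abbreviation std_group :: "nat list \<Rightarrow> (nat \<Rightarrow> nat) set" where
  "std_group mu \<equiv> cyc_group (std_perm mu)"

lemma funpow_block_cycle:
  assumes "off < i" "i \<le> off + m"
  shows "(block_cycle off m ^^ k) i = off + 1 + (i - off - 1 + k) mod m"
proof (induction k)
  case (Suc k)
  let ?r = "(i - off - 1 + k) mod m"
  have "?r < m" using assms by simp
  then have "block_cycle off m (off + 1 + ?r) = off + 1 + (?r + 1) mod m"
    by (cases "?r + 1 = m") (auto simp: block_cycle_def)
  then show ?case using Suc by (simp add: mod_Suc_eq)
qed (use assms in simp)

section \<open>Permutation groups of \<open>{1..n}\<close> and conjugation\<close>

definition perm_group :: "nat \<Rightarrow> (nat \<Rightarrow> nat) set \<Rightarrow> bool" where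
  "perm_group n G \<longleftrightarrow> G \<subseteq> {p. p permutes {1..n}} \<and> id \<in> G \<and>
     (\<forall>a\<in>G. \<forall>b\<in>G. a \<circ> b \<in> G) \<and> (\<forall>a\<in>G. inv a \<in> G)"

lemma perm_group_permutes: "perm_group n G \<Longrightarrow> a \<in> G \<Longrightarrow> a permutes {1..n}"
  and perm_group_id: "perm_group n G \<Longrightarrow> id \<in> G"
  and perm_group_comp: "perm_group n G \<Longrightarrow> a \<in> G \<Longrightarrow> b \<in> G \<Longrightarrow> a \<circ> b \<in> G"
  and perm_group_inv: "perm_group n G \<Longrightarrow> a \<in> G \<Longrightarrow> inv a \<in> G"
  by (auto simp: perm_group_def)

lemma perm_group_Int: "perm_group n H \<Longrightarrow> perm_group n K \<Longrightarrow> perm_group n (H \<inter> K)"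
  by (auto simp: perm_group_def)

lemma perm_group_cyc_group:
  assumes s: "s permutes {1..n}"
  shows "perm_group n (cyc_group s)"
proof -
  obtain N where N: "s ^^ N = id" "0 < N"
    using permutation_is_nilpotent permutation_permutes s by blast
  have "inv (s ^^ k) = s ^^ (N * k - k)" for k
  proof (rule inv_unique_comp)
    have "s ^^ (N * k) = id" by (metis N(1) funpow_mult id_funpow mult.commute)
    moreover have "N * k - k + k = N * k" using N(2) by simp
    ultimately show "s ^^ k \<circ> s ^^ (N * k - k) = id" "s ^^ (N * k - k) \<circ> s ^^ k = id"
      by (metis funpow_add add.commute)+
  qed
  then show ?thesis
    using permutes_funpow[OF s] by (auto simp: perm_group_def cyc_group_def funpow_add[symmetric]
      intro: exI[of _ 0])
qed

lemma subgroup_of_cyc_group: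
  assumes L: "perm_group n L" and sub: "L \<subseteq> cyc_group s" and s: "s permutes {1..n}"
  shows "\<exists>d. L = cyc_group (s ^^ d)"
proof -
  obtain N where N: "s ^^ N = id" "0 < N"
    using permutation_is_nilpotent permutation_permutes s by blast
  define d where "d = (LEAST d. 0 < d \<and> s ^^ d \<in> L)"
  have d: "0 < d" "s ^^ d \<in> L"
    using LeastI[of "\<lambda>d. 0 < d \<and> s ^^ d \<in> L" N] N perm_group_id[OF L] by (auto simp: d_def)
  have powers: "(s ^^ d) ^^ k \<in> L" for k
  proof (induction k)
    case (Suc k)
    then show ?case using perm_group_comp[OF L d(2)] by (simp only: funpow.simps(2))
  qed (simp only: funpow.simps(1) perm_group_id[OF L])
  have "s ^^ j \<in> L \<Longrightarrow> s ^^ j \<in> cyc_group (s ^^ d)" for j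
  proof -
    assume j: "s ^^ j \<in> L"
    have split: "s ^^ j = s ^^ (j mod d) \<circ> (s ^^ d) ^^ (j div d)"
      by (metis funpow_add funpow_mult mod_div_mult_eq mult.commute)
    have "s ^^ (j mod d) = s ^^ j \<circ> inv ((s ^^ d) ^^ (j div d))"
      using permutes_inv_o(1)[OF permutes_funpow[OF permutes_funpow[OF s]]] split
      by (simp add: comp_assoc)
    then have "s ^^ (j mod d) \<in> L"
      using perm_group_comp[OF L j perm_group_inv[OF L powers]] by simp
    then have "j mod d = 0"
      using not_less_Least[of "j mod d" "\<lambda>d. 0 < d \<and> s ^^ d \<in> L"] d(1) by (auto simp: d_def)
    then show ?thesis using split by (auto simp: cyc_group_def)
  qed
  then have "L = cyc_group (s ^^ d)"
    using sub powers by (auto simp: cyc_group_def)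
  then show ?thesis ..
qed

definition conj_perm :: "(nat \<Rightarrow> nat) \<Rightarrow> (nat \<Rightarrow> nat) \<Rightarrow> (nat \<Rightarrow> nat)" where
  "conj_perm g x = g \<circ> x \<circ> inv g"

lemma conj_set_eq_image: "conj_set g B = conj_perm g ` B"
  by (auto simp: conj_set_def conj_perm_def)

lemma conj_perm_comp: "bij g \<Longrightarrow> conj_perm g (a \<circ> b) = conj_perm g a \<circ> conj_perm g b"
  by (simp add: conj_perm_def comp_assoc bij_is_inj) (metis comp_assoc inv_o_cancel bij_is_inj comp_id)

lemma conj_perm_id: "bij g \<Longrightarrow> conj_perm g id = id"
  by (simp add: conj_perm_def bij_is_surj surj_iff[symmetric])

lemma conj_perm_conj_perm: "bij g \<Longrightarrow> bij h \<Longrightarrow> conj_perm g (conj_perm h x) = conj_perm (g \<circ> h) x"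
  by (simp add: conj_perm_def o_inv_distrib comp_assoc)

lemma conj_perm_inv_cancel: "bij g \<Longrightarrow> conj_perm (inv g) (conj_perm g x) = x"
  by (simp add: conj_perm_conj_perm bij_imp_bij_inv bij_is_inj) (simp add: conj_perm_def)

lemma inj_conj_perm: "bij g \<Longrightarrow> inj (conj_perm g)"
  by (metis conj_perm_inv_cancel injI)

lemma inv_conj_perm: "bij g \<Longrightarrow> bij a \<Longrightarrow> inv (conj_perm g a) = conj_perm g (inv a)"
  by (simp add: conj_perm_def o_inv_distrib bij_imp_bij_inv bij_comp inv_inv_eq comp_assoc)

lemma conj_perm_permutes: "g permutes S \<Longrightarrow> a permutes S \<Longrightarrow> conj_perm g a permutes S"
  unfolding conj_perm_def by (intro permutes_compose permutes_inv)

lemma funpow_conj_perm: "bij g \<Longrightarrow> conj_perm g s ^^ k = conj_perm g (s ^^ k)"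
  by (induction k) (simp_all add: conj_perm_id conj_perm_comp)

lemma cyc_group_conj_perm: "bij g \<Longrightarrow> cyc_group (conj_perm g s) = conj_perm g ` cyc_group s"
  by (auto simp: cyc_group_def funpow_conj_perm)

lemma perm_group_conj_perm_image:
  assumes K: "perm_group n K" and p: "p permutes {1..n}"
  shows "perm_group n (conj_perm p ` K)"
  unfolding perm_group_def
proof (intro conjI ballI)
  have bp: "bij p" using p by (rule permutes_bij)
  show "conj_perm p ` K \<subseteq> {q. q permutes {1..n}}"
    using conj_perm_permutes[OF p] perm_group_permutes[OF K] by auto
  show "id \<in> conj_perm p ` K"
    using conj_perm_id[OF bp] perm_group_id[OF K] by (metis image_eqI)
  show "a \<circ> b \<in> conj_perm p ` K" if "a \<in> conj_perm p ` K" "b \<in> conj_perm p ` K" for a b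
    using that perm_group_comp[OF K] by (auto simp: conj_perm_comp[OF bp, symmetric])
  show "inv a \<in> conj_perm p ` K" if a: "a \<in> conj_perm p ` K" for a
  proof -
    obtain k where k: "k \<in> K" "a = conj_perm p k" using a by blast
    have "inv a = conj_perm p (inv k)"
      using k inv_conj_perm[OF bp permutes_bij[OF perm_group_permutes[OF K k(1)]]] by simp
    then show ?thesis using perm_group_inv[OF K k(1)] by blast
  qed
qed

lemma conj_perm_image_self:
  assumes G: "perm_group n G" and g: "g \<in> G"
  shows "conj_perm g ` G = G"
proof
  have bg: "bij g" using perm_group_permutes[OF G g] by (rule permutes_bij)
  show "conj_perm g ` G \<subseteq> G"
    using G g by (auto simp: conj_perm_def intro!: perm_group_comp perm_group_inv)
  show "G \<subseteq> conj_perm g ` G"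
  proof
    fix x assume x: "x \<in> G"
    have "conj_perm (inv g) x \<in> G"
      using G g x by (auto simp: conj_perm_def inv_inv_eq[OF bg] intro!: perm_group_comp perm_group_inv)
    then show "x \<in> conj_perm g ` G"
      using conj_perm_inv_cancel[OF bij_imp_bij_inv[OF bg], of x] by (metis image_eqI inv_inv_eq[OF bg])
  qed
qed

section \<open>Orbit sizes determine the partition\<close>

definition group_orbit :: "(nat \<Rightarrow> nat) set \<Rightarrow> nat \<Rightarrow> nat set" where
  "group_orbit G x = (\<lambda>h. h x) ` G"

definition orbit_sizes :: "nat \<Rightarrow> (nat \<Rightarrow> nat) set \<Rightarrow> nat multiset" where
  "orbit_sizes n G = image_mset (\<lambda>x. card (group_orbit G x)) (mset_set {1..n})"

lemma group_orbit_conj_perm: "group_orbit (conj_perm g ` G) y = g ` group_orbit G (inv g y)"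
  by (auto simp: group_orbit_def conj_perm_def image_iff)

lemma orbit_sizes_conj_perm:
  assumes g: "g permutes {1..n}"
  shows "orbit_sizes n (conj_perm g ` G) = orbit_sizes n G"
proof -
  have "orbit_sizes n (conj_perm g ` G)
      = image_mset (\<lambda>x. card (group_orbit G x)) (image_mset (inv g) (mset_set {1..n}))"
    unfolding orbit_sizes_def group_orbit_conj_perm multiset.map_comp comp_def
    using card_image[OF inj_on_subset[OF permutes_inj[OF g]]] by simp
  also have "image_mset (inv g) (mset_set {1..n}) = mset_set {1..n}"
    using image_mset_mset_set[OF inj_on_subset[OF permutes_inj[OF permutes_inv[OF g]]]]
      permutes_image[OF permutes_inv[OF g]] by simp
  finally show ?thesis by (simp add: orbit_sizes_def)
qed

lemma group_orbit_cyc_group: "group_orbit (cyc_group s) x = range (\<lambda>k. (s ^^ k) x)"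
  by (auto simp: group_orbit_def cyc_group_def)

lemma block_cycle_orbit:
  assumes "off < x" "x \<le> off + m"
  shows "range (\<lambda>k. (block_cycle off m ^^ k) x) = {off<..off + m}"
proof
  show "range (\<lambda>k. (block_cycle off m ^^ k) x) \<subseteq> {off<..off + m}"
    using permutes_in_image[OF permutes_funpow[OF block_cycle_permutes]] assms by auto
  show "{off<..off + m} \<subseteq> range (\<lambda>k. (block_cycle off m ^^ k) x)"
  proof
    fix y assume y: "y \<in> {off<..off + m}"
    define r s where "r = y - off - 1" and "s = x - off - 1"
    have "r < m" "s < m" using y assms by (auto simp: r_def s_def)
    then have "(s + (r + m - s)) mod m = r" by simp
    then have "(block_cycle off m ^^ (r + m - s)) x = y"
      using funpow_block_cycle[OF assms] y by (simp add: r_def s_def)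
    then show "y \<in> range (\<lambda>k. (block_cycle off m ^^ k) x)" by (metis rangeI)
  qed
qed

lemma funpow_std_perm_aux_Cons_first:
  assumes "off < x" "x \<le> off + m"
  shows "(std_perm_aux off (m # ms) ^^ k) x = (block_cycle off m ^^ k) x"
proof (induction k)
  case (Suc k)
  have "(block_cycle off m ^^ k) x \<in> {off<..off + m}"
    using permutes_in_image[OF permutes_funpow[OF block_cycle_permutes]] assms by simp
  then show ?case using Suc by (simp add: block_cycle_def)
qed simp

lemma funpow_std_perm_aux_Cons_rest:
  assumes "off + m < x"
  shows "(std_perm_aux off (m # ms) ^^ k) x = (std_perm_aux (off + m) ms ^^ k) x
       \<and> off + m < (std_perm_aux (off + m) ms ^^ k) x"
proof (induction k)
  case (Suc k)
  then show ?case using std_perm_aux_greater by (simp add: std_perm_aux_Cons block_cycle_def)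
qed (use assms in simp)

lemma orbit_sizes_std_perm_aux:
  "image_mset (\<lambda>x. card (group_orbit (cyc_group (std_perm_aux off ms)) x))
     (mset_set {off<..off + sum_list ms})
   = sum_list (map (\<lambda>m. replicate_mset m m) ms)"
proof (induction ms arbitrary: off)
  case (Cons m ms)
  let ?orb = "\<lambda>ms off x. card (group_orbit (cyc_group (std_perm_aux off ms)) x)"
  have "{off<..off + sum_list (m # ms)} = {off<..off + m} \<union> {off + m<..off + m + sum_list ms}"
    by auto
  then have split: "mset_set {off<..off + sum_list (m # ms)}
      = mset_set {off<..off + m} + mset_set {off + m<..off + m + sum_list ms}"
    by (simp add: mset_set_Union)
  have "image_mset (?orb (m # ms) off) (mset_set {off<..off + m}) = image_mset (\<lambda>x. m) (mset_set {off<..off + m})"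
    by (rule image_mset_cong) (simp add: group_orbit_cyc_group funpow_std_perm_aux_Cons_first
        block_cycle_orbit del: std_perm_aux.simps)
  moreover have "image_mset (?orb (m # ms) off) (mset_set {off + m<..off + m + sum_list ms})
      = image_mset (?orb ms (off + m)) (mset_set {off + m<..off + m + sum_list ms})"
    by (rule image_mset_cong)
      (simp add: group_orbit_cyc_group funpow_std_perm_aux_Cons_rest del: std_perm_aux.simps)
  ultimately show ?case
    unfolding split image_mset_union Cons.IH by (simp add: image_mset_const_eq)
qed simp

lemma orbit_sizes_std_perm:
  assumes "mu \<in> partitions n"
  shows "orbit_sizes n (std_group mu) = sum_list (map (\<lambda>m. replicate_mset m m) mu)"
proof -
  have "{0<..sum_list mu} = {1..n}" using assms by (auto simp: partitions_def)
  then show ?thesis using orbit_sizes_std_perm_aux[of 0 mu] by (simp add: orbit_sizes_def std_perm_def)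
qed

lemma count_sum_list_replicate_mset:
  "count (sum_list (map (\<lambda>m. replicate_mset m m) ms)) k = k * count (mset ms) k"
  by (induction ms) auto

lemma partition_eqI_orbit_sizes:
  assumes mu: "mu \<in> partitions n" and nu: "nu \<in> partitions n"
    and eq: "orbit_sizes n (std_group mu) = orbit_sizes n (std_group nu)"
  shows "mu = nu"
proof -
  have "count (mset mu) k = count (mset nu) k" for k
  proof (cases "k = 0")
    case True
    then have "k \<notin> set mu" "k \<notin> set nu" using mu nu by (auto simp: partitions_def)
    then show ?thesis by (metis count_eq_zero_iff set_mset_mset)
  next
    case False
    then show ?thesis using eq unfolding orbit_sizes_std_perm[OF mu] orbit_sizes_std_perm[OF nu]
      by (metis count_sum_list_replicate_mset mult_left_cancel)
  qed
  then have "mset (rev mu) = mset (rev nu)" by (simp add: multiset_eqI)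
  moreover have "sorted (rev mu)" "sorted (rev nu)"
    using mu nu by (auto simp: partitions_def sorted_wrt_rev)
  ultimately show ?thesis by (metis properties_for_sort rev_rev_ident sorted_sort_id)
qed

section \<open>Every permutation is conjugate to a standard one\<close>

lemma cycle_of_permutation_block:
  assumes f: "permutation f" and S: "f ` S \<subseteq> S" and x: "x \<in> S"
  defines "C \<equiv> (\<lambda>k. (f ^^ k) x) ` {..<least_power f x}"
  shows "bij_betw (\<lambda>i. (f ^^ (i - off - 1)) x) {off<..off + least_power f x} C"
    and "C \<subseteq> S" and "f ` C = C"
proof -
  let ?m = "least_power f x"
  have "inj_on (\<lambda>k. (f ^^ k) x) {..<?m}"
    using cycle_of_permutation[OF f, of x] by (simp add: distinct_map atLeast_upt)
  then have "bij_betw (\<lambda>k. (f ^^ k) x) {..<?m} C"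
    by (simp add: C_def bij_betw_imageI)
  moreover have "bij_betw (\<lambda>i. i - off - 1) {off<..off + ?m} {..<?m}"
    by (rule bij_betw_byWitness[where f' = "\<lambda>k. k + off + 1"]) auto
  ultimately show "bij_betw (\<lambda>i. (f ^^ (i - off - 1)) x) {off<..off + ?m} C"
    using bij_betw_trans by (fastforce simp: comp_def)
  have "(f ^^ k) x \<in> S" for k by (induction k) (use S x in auto)
  then show "C \<subseteq> S" by (auto simp: C_def)
  have C_range: "C = range (\<lambda>k. (f ^^ k) x)"
    using support_set[OF f, of x] by (simp add: C_def atLeast_upt)
  have "f ` C \<subseteq> C"
  proof (rule image_subsetI)
    fix y assume "y \<in> C"
    then obtain k where "y = (f ^^ k) x" by (auto simp: C_range)
    then have "f y = (f ^^ Suc k) x" by simp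
    then show "f y \<in> C" unfolding C_range by (rule range_eqI)
  qed
  then show "f ` C = C"
    using endo_inj_surj[of C f] bij_is_inj[OF permutation_bijective[OF f]]
    by (simp add: C_def inj_on_subset)
qed

lemma funpow_block_cycle_conj:
  assumes "(f ^^ m) x = x" "off < i" "i \<le> off + m"
  shows "f ((f ^^ (i - off - 1)) x) = (f ^^ (block_cycle off m i - off - 1)) x"
proof (cases "i = off + m")
  case True
  then have "Suc (i - off - 1) = m" using assms(2) by simp
  then have "f ((f ^^ (i - off - 1)) x) = (f ^^ m) x" by (metis comp_apply funpow.simps(2))
  then show ?thesis using True assms(1) by (simp add: block_cycle_def)
next
  case False
  then have "Suc (i - off - 1) = i + 1 - off - 1" using assms(2) by simp
  then show ?thesis using False assms(2,3) by (metis block_cycle_def comp_apply funpow.simps(2))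
qed

lemma intertwine_std_perm_aux_Cons:
  assumes x: "(f ^^ m) x = x"
    and C: "bij_betw (\<lambda>i. (f ^^ (i - off - 1)) x) {off<..off + m} C" "C \<subseteq> S"
    and g': "bij_betw g' {off + m<..off + m + k} (S - C)"
    and rel': "\<forall>i\<in>{off + m<..off + m + k}. f (g' i) = g' (std_perm_aux (off + m) ms i)"
    and k: "sum_list ms = k"
  shows "\<exists>g. bij_betw g {off<..off + m + k} S \<and>
     (\<forall>i\<in>{off<..off + m + k}. f (g i) = g (std_perm_aux off (m # ms) i))"
proof (intro exI conjI ballI)
  define g where "g = (\<lambda>i. if i \<le> off + m then (f ^^ (i - off - 1)) x else g' i)"
  have "bij_betw g {off<..off + m} C"
    using C(1) by (rule bij_betw_cong[THEN iffD1, rotated]) (simp add: g_def)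
  moreover have "bij_betw g {off + m<..off + m + k} (S - C)"
    using g' by (rule bij_betw_cong[THEN iffD1, rotated]) (simp add: g_def)
  ultimately have "bij_betw g ({off<..off + m} \<union> {off + m<..off + m + k}) (C \<union> (S - C))"
    by (rule bij_betw_combine) auto
  moreover have "{off<..off + m} \<union> {off + m<..off + m + k} = {off<..off + m + k}" by auto
  moreover have "C \<union> (S - C) = S" using C(2) by blast
  ultimately show "bij_betw g {off<..off + m + k} S" by simp
  fix i assume i: "i \<in> {off<..off + m + k}"
  show "f (g i) = g (std_perm_aux off (m # ms) i)"
  proof (cases "i \<le> off + m")
    case True
    then have "block_cycle off m i \<le> off + m" using i by (auto simp: block_cycle_def)
    then show ?thesis
      using True i funpow_block_cycle_conj[OF x, of off i] by (simp add: g_def block_cycle_def)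
  next
    case False
    then have "off + m < std_perm_aux (off + m) ms i" using std_perm_aux_greater by simp
    then show ?thesis using False i rel' by (simp add: g_def)
  qed
qed

text \<open>Splitting off first the cycle of a point of maximal period makes the block lengths weakly
  decreasing.\<close>
lemma permutation_conj_std_perm_aux:
  assumes "permutation f" "finite S" "f ` S = S"
  shows "\<exists>ms g. ms \<in> partitions (card S) \<and> set ms \<subseteq> least_power f ` S
     \<and> bij_betw g {off<..off + card S} S
     \<and> (\<forall>i\<in>{off<..off + card S}. f (g i) = g (std_perm_aux off ms i))"
  using assms(2,3)
proof (induction "card S" arbitrary: S off rule: less_induct)
  case less
  note fin = less.prems(1) and fS = less.prems(2)
  show ?case
  proof (cases "S = {}")
    case True
    then show ?thesis by (intro exI[of _ "[]"]) (auto simp: partitions_def bij_betw_def)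
  next
    case False
    define m where "m = Max (least_power f ` S)"
    have m_in: "m \<in> least_power f ` S" using fin False by (simp add: m_def)
    then obtain x where x: "x \<in> S" "least_power f x = m" by blast
    define C where "C = (\<lambda>k. (f ^^ k) x) ` {..<m}"
    have C: "bij_betw (\<lambda>i. (f ^^ (i - off - 1)) x) {off<..off + m} C" "C \<subseteq> S" "f ` C = C"
      using cycle_of_permutation_block(1)[OF assms(1) _ x(1), of off]
        cycle_of_permutation_block(2,3)[OF assms(1) _ x(1)] fS
      by (simp_all add: C_def x(2))
    have m: "0 < m" "(f ^^ m) x = x" using least_power_of_permutation[OF assms(1), of x] x(2) by auto
    have "card C = m" using bij_betw_same_card[OF C(1)] by simp
    then have card: "card (S - C) = card S - m" "m \<le> card S"
      using card_Diff_subset[OF finite_subset[OF C(2) fin] C(2)] card_mono[OF fin C(2)] by auto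
    have "f ` (S - C) = S - C"
      using image_set_diff[OF bij_is_inj[OF permutation_bijective[OF assms(1)]]] C(3) fS by simp
    then obtain ms g' where ms: "ms \<in> partitions (card (S - C))" "set ms \<subseteq> least_power f ` (S - C)"
      and g': "bij_betw g' {off + m<..off + m + card (S - C)} (S - C)"
      and rel': "\<forall>i\<in>{off + m<..off + m + card (S - C)}. f (g' i) = g' (std_perm_aux (off + m) ms i)"
      using less.hyps[of "S - C" "off + m"] card m(1) fin by auto
    moreover have "sum_list ms = card (S - C)" using ms(1) by (simp add: partitions_def)
    moreover have "off + m + card (S - C) = off + card S" using card by simp
    ultimately obtain g where "bij_betw g {off<..off + card S} S"
      "\<forall>i\<in>{off<..off + card S}. f (g i) = g (std_perm_aux off (m # ms) i)"
      using intertwine_std_perm_aux_Cons[OF m(2) C(1,2) g'] by metis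
    moreover have "set (m # ms) \<subseteq> least_power f ` S" using ms(2) m_in by auto
    moreover have "m # ms \<in> partitions (card S)"
      using ms m(1) card fin by (auto simp: partitions_def m_def)
    ultimately show ?thesis by blast
  qed
qed

lemma permutes_conj_std_perm:
  assumes f: "f permutes {1..n}"
  obtains mu g where "mu \<in> partitions n" "g permutes {1..n}" "f = conj_perm g (std_perm mu)"
proof -
  have I: "{0<..0 + card {1..n}} = {1..n}" by auto
  obtain mu g0 where mu: "mu \<in> partitions n" and g0: "bij_betw g0 {1..n} {1..n}"
    and rel: "\<forall>i\<in>{1..n}. f (g0 i) = g0 (std_perm mu i)"
    using permutation_conj_std_perm_aux[OF _ _ permutes_image[OF f], of 0] f permutation_permutes
    unfolding I by (auto simp: std_perm_def)
  define g where "g = restrict_id g0 {1..n}"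
  have g: "g permutes {1..n}" unfolding g_def by (rule permutes_restrict_id[OF g0])
  have sigma: "std_perm mu permutes {1..n}" using std_perm_permutes[OF mu] .
  have "f \<circ> g = g \<circ> std_perm mu"
  proof
    fix i show "(f \<circ> g) i = (g \<circ> std_perm mu) i"
      using rel permutes_in_image[OF sigma, of i] permutes_not_in[OF f] permutes_not_in[OF sigma]
      by (cases "i \<in> {1..n}") (auto simp: g_def)
  qed
  then have "f = conj_perm g (std_perm mu)"
    by (metis conj_perm_def comp_assoc comp_id permutes_inv_o(1)[OF g])
  with mu g that show ?thesis by blast
qed

section \<open>Double cosets and their types\<close>

lemma double_coset_memI: "a \<in> H \<Longrightarrow> b \<in> K \<Longrightarrow> x = a \<circ> p \<circ> b \<Longrightarrow> x \<in> double_coset H p K"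
  by (auto simp: double_coset_def)

lemma double_coset_memE:
  assumes "x \<in> double_coset H p K"
  obtains a b where "a \<in> H" "b \<in> K" "x = a \<circ> p \<circ> b"
  using assms by (auto simp: double_coset_def)

lemma self_in_double_coset: "perm_group n H \<Longrightarrow> perm_group n K \<Longrightarrow> p \<in> double_coset H p K"
  by (rule double_coset_memI[of id _ id]) (auto intro: perm_group_id)

lemma double_coset_eq:
  assumes H: "perm_group n H" and K: "perm_group n K" and q: "q \<in> double_coset H p K"
  shows "double_coset H q K = double_coset H p K"
proof -
  obtain a b where ab: "a \<in> H" "b \<in> K" "q = a \<circ> p \<circ> b" using q by (rule double_coset_memE)
  have a: "a permutes {1..n}" and b: "b permutes {1..n}"
    using perm_group_permutes H K ab(1,2) by blast+
  have p: "p = inv a \<circ> q \<circ> inv b"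
    using ab(3) by (simp add: comp_assoc permutes_inv_o[OF a] permutes_inv_o[OF b])
      (simp add: comp_assoc[symmetric] permutes_inv_o[OF a])
  show ?thesis
  proof (intro equalityI subsetI)
    fix x assume "x \<in> double_coset H q K"
    then obtain a' b' where x: "a' \<in> H" "b' \<in> K" "x = a' \<circ> q \<circ> b'" by (rule double_coset_memE)
    then have "x = (a' \<circ> a) \<circ> p \<circ> (b \<circ> b')" using ab(3) by (simp add: comp_assoc)
    then show "x \<in> double_coset H p K"
      using perm_group_comp[OF H x(1) ab(1)] perm_group_comp[OF K ab(2) x(2)]
      by (rule double_coset_memI[rotated -1])
  next
    fix x assume "x \<in> double_coset H p K"
    then obtain a' b' where x: "a' \<in> H" "b' \<in> K" "x = a' \<circ> p \<circ> b'" by (rule double_coset_memE)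
    then have "x = (a' \<circ> inv a) \<circ> q \<circ> (inv b \<circ> b')" using p by (simp add: comp_assoc)
    then show "x \<in> double_coset H q K"
      using perm_group_comp[OF H x(1) perm_group_inv[OF H ab(1)]]
        perm_group_comp[OF K perm_group_inv[OF K ab(2)] x(2)]
      by (rule double_coset_memI[rotated -1])
  qed
qed

lemma stabilizer_double_coset_member:
  assumes H: "perm_group n H" and K: "perm_group n K" and p: "p permutes {1..n}"
    and a: "a \<in> H" and b: "b \<in> K"
  shows "H \<inter> conj_perm (a \<circ> p \<circ> b) ` K = conj_perm a ` (H \<inter> conj_perm p ` K)"
proof -
  have ba: "bij a" and bb: "bij b" and bp: "bij p"
    using perm_group_permutes[OF H a] perm_group_permutes[OF K b] p by (auto intro: permutes_bij)
  have "conj_perm (a \<circ> p \<circ> b) k = conj_perm a (conj_perm p (conj_perm b k))" for k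
    using ba bb bp by (simp add: conj_perm_conj_perm bij_comp comp_assoc)
  then have "conj_perm (a \<circ> p \<circ> b) ` K = conj_perm a ` conj_perm p ` conj_perm b ` K"
    by (simp add: image_image)
  also have "conj_perm b ` K = K" using conj_perm_image_self[OF K b] .
  finally have "conj_perm (a \<circ> p \<circ> b) ` K = conj_perm a ` conj_perm p ` K" .
  then show ?thesis
    using image_Int[OF inj_conj_perm[OF ba]] conj_perm_image_self[OF H a] by simp
qed

lemma perm_group_std_group: "mu \<in> partitions n \<Longrightarrow> perm_group n (std_group mu)"
  by (rule perm_group_cyc_group[OF std_perm_permutes])

lemma stabilizer_conj_std_group:
  assumes alpha: "alpha \<in> partitions n" and beta: "beta \<in> partitions n" and p: "p permutes {1..n}"
  obtains mu g where "mu \<in> partitions n" "g permutes {1..n}"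
    "std_group alpha \<inter> conj_perm p ` std_group beta = conj_perm g ` std_group mu"
proof -
  let ?L = "std_group alpha \<inter> conj_perm p ` std_group beta"
  have "perm_group n ?L"
    by (intro perm_group_Int perm_group_conj_perm_image perm_group_std_group alpha beta p)
  then obtain d where d: "?L = cyc_group (std_perm alpha ^^ d)"
    using subgroup_of_cyc_group std_perm_permutes[OF alpha] by blast
  obtain mu g where mu: "mu \<in> partitions n" "g permutes {1..n}"
    "std_perm alpha ^^ d = conj_perm g (std_perm mu)"
    using permutes_conj_std_perm[OF permutes_funpow[OF std_perm_permutes[OF alpha]]] by blast
  have "?L = conj_perm g ` std_group mu"
    using d mu(3) cyc_group_conj_perm[OF permutes_bij[OF mu(2)]] by simp
  with mu that show ?thesis by blast
qed

lemma conj_std_group_eqD: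
  assumes mu: "mu \<in> partitions n" and nu: "nu \<in> partitions n"
    and g: "g permutes {1..n}" and g': "g' permutes {1..n}"
    and eq: "conj_perm g ` std_group mu = conj_perm g' ` std_group nu"
  shows "mu = nu"
proof -
  have "orbit_sizes n (std_group mu) = orbit_sizes n (std_group nu)"
    using arg_cong[OF eq, of "orbit_sizes n"] orbit_sizes_conj_perm[OF g] orbit_sizes_conj_perm[OF g']
    by simp
  then show ?thesis by (rule partition_eqI_orbit_sizes[OF mu nu])
qed

definition dcosets :: "nat \<Rightarrow> (nat \<Rightarrow> nat) set \<Rightarrow> (nat \<Rightarrow> nat) set \<Rightarrow> (nat \<Rightarrow> nat) set set" where
  "dcosets n H K = {double_coset H p K | p. p permutes {1..n}}"

definition typed_dcosets :: "nat \<Rightarrow> nat list \<Rightarrow> nat list \<Rightarrow> nat list \<Rightarrow> (nat \<Rightarrow> nat) set set" where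
  "typed_dcosets n mu alpha beta = {D. \<exists>p. p permutes {1..n} \<and>
     D = double_coset (std_group alpha) p (std_group beta) \<and>
     conjugate_in_Sn n (std_group alpha \<inter> conj_set p (std_group beta)) (std_group mu)}"

lemma bcoef_eq_card: "bcoef n mu alpha beta = card (typed_dcosets n mu alpha beta)"
  by (simp add: bcoef_def typed_dcosets_def)

lemma typed_dcosets_iff:
  "D \<in> typed_dcosets n mu alpha beta \<longleftrightarrow> (\<exists>p g. p permutes {1..n} \<and> g permutes {1..n} \<and>
     D = double_coset (std_group alpha) p (std_group beta) \<and>
     std_group alpha \<inter> conj_perm p ` std_group beta = conj_perm g ` std_group mu)"
  by (auto simp: typed_dcosets_def conjugate_in_Sn_def conj_set_eq_image)

lemma typed_dcosets_subset: "typed_dcosets n mu alpha beta \<subseteq> dcosets n (std_group alpha) (std_group beta)"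
  by (auto simp: typed_dcosets_iff dcosets_def)

lemma finite_dcosets: "finite (dcosets n H K)"
proof -
  have "dcosets n H K = (\<lambda>p. double_coset H p K) ` {p. p permutes {1..n}}"
    by (auto simp: dcosets_def)
  then show ?thesis by (simp add: finite_permutations)
qed

lemma finite_typed_dcosets: "finite (typed_dcosets n mu alpha beta)"
  using finite_subset[OF typed_dcosets_subset finite_dcosets] .

lemma typed_dcoset_stabilizer:
  assumes alpha: "alpha \<in> partitions n" and beta: "beta \<in> partitions n"
    and D: "D \<in> typed_dcosets n mu alpha beta" and q: "q \<in> D"
  obtains g where "g permutes {1..n}"
    "std_group alpha \<inter> conj_perm q ` std_group beta = conj_perm g ` std_group mu"
proof -
  have H: "perm_group n (std_group alpha)" and K: "perm_group n (std_group beta)"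
    using alpha beta by (auto intro: perm_group_std_group)
  obtain p g where p: "p permutes {1..n}" "g permutes {1..n}"
    "D = double_coset (std_group alpha) p (std_group beta)"
    "std_group alpha \<inter> conj_perm p ` std_group beta = conj_perm g ` std_group mu"
    using D by (auto simp: typed_dcosets_iff)
  obtain a b where ab: "a \<in> std_group alpha" "b \<in> std_group beta" "q = a \<circ> p \<circ> b"
    using q p(3) by (auto elim: double_coset_memE)
  have a: "a permutes {1..n}" using perm_group_permutes[OF H ab(1)] .
  have "std_group alpha \<inter> conj_perm q ` std_group beta = conj_perm a ` conj_perm g ` std_group mu"
    using stabilizer_double_coset_member[OF H K p(1) ab(1,2)] p(4) ab(3) by simp
  also have "\<dots> = conj_perm (a \<circ> g) ` std_group mu"
    by (simp add: image_image conj_perm_conj_perm permutes_bij[OF a] permutes_bij[OF p(2)])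
  finally show ?thesis using that permutes_compose[OF p(2) a] by blast
qed

lemma typed_dcosets_disjoint:
  assumes alpha: "alpha \<in> partitions n" and beta: "beta \<in> partitions n"
    and mu: "mu \<in> partitions n" and nu: "nu \<in> partitions n"
    and D: "D \<in> typed_dcosets n mu alpha beta" "D \<in> typed_dcosets n nu alpha beta"
  shows "mu = nu"
proof -
  obtain p g where p: "p permutes {1..n}" "g permutes {1..n}"
    "D = double_coset (std_group alpha) p (std_group beta)"
    "std_group alpha \<inter> conj_perm p ` std_group beta = conj_perm g ` std_group mu"
    using D(1) by (auto simp: typed_dcosets_iff)
  have "p \<in> D" using p(3) self_in_double_coset perm_group_std_group alpha beta by blast
  then obtain g' where "g' permutes {1..n}"
    "std_group alpha \<inter> conj_perm p ` std_group beta = conj_perm g' ` std_group nu"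
    using typed_dcoset_stabilizer[OF alpha beta D(2)] by blast
  then show ?thesis using conj_std_group_eqD[OF mu nu p(2)] p(4) by simp
qed

lemma dcoset_has_type:
  assumes alpha: "alpha \<in> partitions n" and beta: "beta \<in> partitions n"
    and D: "D \<in> dcosets n (std_group alpha) (std_group beta)"
  shows "\<exists>mu\<in>partitions n. D \<in> typed_dcosets n mu alpha beta"
proof -
  obtain p where p: "p permutes {1..n}" "D = double_coset (std_group alpha) p (std_group beta)"
    using D by (auto simp: dcosets_def)
  obtain mu g where "mu \<in> partitions n" "g permutes {1..n}"
    "std_group alpha \<inter> conj_perm p ` std_group beta = conj_perm g ` std_group mu"
    using stabilizer_conj_std_group[OF alpha beta p(1)] .
  then show ?thesis using p by (auto simp: typed_dcosets_iff)
qed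

definition dcoset_type :: "nat \<Rightarrow> nat list \<Rightarrow> nat list \<Rightarrow> (nat \<Rightarrow> nat) set \<Rightarrow> nat list" where
  "dcoset_type n alpha beta D = (THE mu. mu \<in> partitions n \<and> D \<in> typed_dcosets n mu alpha beta)"

lemma dcoset_type_eq:
  assumes alpha: "alpha \<in> partitions n" and beta: "beta \<in> partitions n"
    and mu: "mu \<in> partitions n" and D: "D \<in> typed_dcosets n mu alpha beta"
  shows "dcoset_type n alpha beta D = mu"
  unfolding dcoset_type_def
  using typed_dcosets_disjoint[OF alpha beta _ mu _ D] mu D by blast

lemma dcoset_type:
  assumes alpha: "alpha \<in> partitions n" and beta: "beta \<in> partitions n"
    and D: "D \<in> dcosets n (std_group alpha) (std_group beta)"
  shows "dcoset_type n alpha beta D \<in> partitions n"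
    and "D \<in> typed_dcosets n (dcoset_type n alpha beta D) alpha beta"
  using dcoset_has_type[OF alpha beta D] dcoset_type_eq[OF alpha beta] by auto

section \<open>Cosets of labellings\<close>

definition lcoset :: "(nat \<Rightarrow> 'a) \<Rightarrow> (nat \<Rightarrow> nat) set \<Rightarrow> (nat \<Rightarrow> 'a) set" where
  "lcoset l H = (\<lambda>h. l \<circ> h) ` H"

lemma C_sp_eq: "C_sp n mu U = {lcoset l (std_group mu) | l. l \<in> bijs n U}"
  by (simp add: C_sp_def quot_species_def lcoset_def)

lemma lcoset_memI: "h \<in> H \<Longrightarrow> x = l \<circ> h \<Longrightarrow> x \<in> lcoset l H"
  by (auto simp: lcoset_def)

lemma lcoset_memE:
  assumes "x \<in> lcoset l H"
  obtains h where "h \<in> H" "x = l \<circ> h"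
  using assms by (auto simp: lcoset_def)

lemma self_in_lcoset: "perm_group n H \<Longrightarrow> l \<in> lcoset l H"
  by (rule lcoset_memI[of id]) (auto intro: perm_group_id)

lemma lcoset_eq:
  assumes H: "perm_group n H" and x: "x \<in> lcoset l H"
  shows "lcoset x H = lcoset l H"
proof -
  obtain h where h: "h \<in> H" "x = l \<circ> h" using x by (rule lcoset_memE)
  have "(\<lambda>h'. x \<circ> h') ` H = (\<lambda>h'. l \<circ> h') ` (\<lambda>h'. h \<circ> h') ` H"
    using h(2) by (simp add: image_image comp_assoc)
  also have "(\<lambda>h'. h \<circ> h') ` H = H"
  proof (intro equalityI subsetI)
    fix h' assume "h' \<in> H"
    moreover have "h' = h \<circ> (inv h \<circ> h')"
      using permutes_inv_o(1)[OF perm_group_permutes[OF H h(1)]] by (simp add: comp_assoc[symmetric])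
    ultimately show "h' \<in> (\<lambda>h'. h \<circ> h') ` H"
      using perm_group_comp[OF H perm_group_inv[OF H h(1)]] by blast
  qed (use perm_group_comp[OF H h(1)] in blast)
  finally show ?thesis unfolding lcoset_def .
qed

lemma lcoset_eqI: "perm_group n H \<Longrightarrow> x \<in> lcoset l H \<Longrightarrow> x \<in> lcoset m H \<Longrightarrow> lcoset l H = lcoset m H"
  by (metis lcoset_eq)

lemma bijs_comp_permutes:
  assumes l: "l \<in> bijs n U" and h: "h permutes {1..n}"
  shows "l \<circ> h \<in> bijs n U"
proof -
  have "bij_betw (l \<circ> h) {1..n} U"
    using l permutes_imp_bij[OF h] by (auto simp: bijs_def intro: bij_betw_trans)
  moreover have "l \<circ> h \<in> extensional {1..n}"
    using l permutes_not_in[OF h] by (auto simp: bijs_def extensional_def)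
  ultimately show ?thesis by (simp add: bijs_def)
qed

lemma lcoset_subset_bijs: "perm_group n H \<Longrightarrow> l \<in> bijs n U \<Longrightarrow> lcoset l H \<subseteq> bijs n U"
  by (auto simp: lcoset_def intro: bijs_comp_permutes perm_group_permutes)

lemma bijs_comp_cancel:
  assumes l: "l \<in> bijs n U" and x: "x permutes {1..n}" and y: "y permutes {1..n}"
    and eq: "l \<circ> x = l \<circ> y"
  shows "x = y"
proof
  fix z show "x z = y z"
  proof (cases "z \<in> {1..n}")
    case True
    moreover have "inj_on l {1..n}" using l by (auto simp: bijs_def bij_betw_def)
    ultimately show ?thesis
      using permutes_in_image[OF x, of z] permutes_in_image[OF y, of z] fun_cong[OF eq, of z]
      by (auto dest: inj_onD)
  qed (use permutes_not_in x y in metis)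
qed

lemma bijs_obtain_permutes:
  assumes l: "l \<in> bijs n U" and l': "l' \<in> bijs n U"
  obtains q where "q permutes {1..n}" "l' = l \<circ> q"
proof
  have bl: "bij_betw l {1..n} U" and bl': "bij_betw l' {1..n} U" using l l' by (auto simp: bijs_def)
  define q where "q = restrict_id (inv_into {1..n} l \<circ> l') {1..n}"
  show "q permutes {1..n}"
    unfolding q_def by (rule permutes_restrict_id[OF bij_betw_trans[OF bl' bij_betw_inv_into[OF bl]]])
  show "l' = l \<circ> q"
  proof
    fix z show "l' z = (l \<circ> q) z"
      using l l' bij_betwE[OF bl'] bij_betw_inv_into_right[OF bl]
      by (cases "z \<in> {1..n}") (auto simp: q_def bijs_def extensional_def)
  qed
qed

definition relabel :: "nat \<Rightarrow> ('a \<Rightarrow> 'a) \<Rightarrow> (nat \<Rightarrow> 'a) \<Rightarrow> (nat \<Rightarrow> 'a)" where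
  "relabel n s l = restrict (s \<circ> l) {1..n}"

lemma quot_transport_eq: "quot_transport n s c = relabel n s ` c"
  by (simp add: quot_transport_def relabel_def)

lemma relabel_comp:
  assumes p: "p permutes {1..n}"
  shows "relabel n s (l \<circ> p) = relabel n s l \<circ> p"
proof
  fix x show "relabel n s (l \<circ> p) x = (relabel n s l \<circ> p) x"
    using permutes_in_image[OF p, of x] permutes_not_in[OF p, of x] by (simp add: relabel_def)
qed

lemma inj_on_relabel: "inj_on s U \<Longrightarrow> inj_on (relabel n s) (bijs n U)"
proof (rule inj_onI)
  fix l l' assume s: "inj_on s U" and l: "l \<in> bijs n U" and l': "l' \<in> bijs n U"
    and eq: "relabel n s l = relabel n s l'"
  show "l = l'"
  proof (rule extensionalityI[of _ "{1..n}"])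
    show "l \<in> extensional {1..n}" "l' \<in> extensional {1..n}" using l l' by (auto simp: bijs_def)
    fix x assume x: "x \<in> {1..n}"
    then have "s (l x) = s (l' x)" using fun_cong[OF eq, of x] by (simp add: relabel_def)
    moreover have "l x \<in> U" "l' x \<in> U" using l l' x by (auto simp: bijs_def dest: bij_betwE)
    ultimately show "l x = l' x" using inj_onD[OF s] by blast
  qed
qed

definition aligned :: "(nat \<Rightarrow> 'a) set \<Rightarrow> (nat \<Rightarrow> 'a) set \<Rightarrow> (nat \<Rightarrow> nat) \<Rightarrow> (nat \<Rightarrow> 'a) set" where
  "aligned c c' p = {x \<in> c. x \<circ> p \<in> c'}"

text \<open>For \<open>c = l H\<close> and \<open>c' = l' K\<close> this is the double coset \<open>H (l\<inverse> l') K\<close>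
  (lemma \<open>pair_dcoset_lcoset\<close>); the intrinsic form makes it invariant under relabelling.\<close>
definition pair_dcoset :: "nat \<Rightarrow> (nat \<Rightarrow> 'a) set \<Rightarrow> (nat \<Rightarrow> 'a) set \<Rightarrow> (nat \<Rightarrow> nat) set" where
  "pair_dcoset n c c' = {p. p permutes {1..n} \<and> aligned c c' p \<noteq> {}}"

lemma aligned_lcoset:
  assumes H: "perm_group n H" and K: "perm_group n K" and l: "l \<in> bijs n U"
    and p: "p permutes {1..n}" and x0: "x0 \<in> aligned (lcoset l H) (lcoset l' K) p"
  shows "aligned (lcoset l H) (lcoset l' K) p = lcoset x0 (H \<inter> conj_perm p ` K)"
proof -
  have x0H: "x0 \<in> lcoset l H" and x0K: "x0 \<circ> p \<in> lcoset l' K" using x0 by (auto simp: aligned_def)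
  have x0_bijs: "x0 \<in> bijs n U" using lcoset_subset_bijs[OF H l] x0H by blast
  have "x0 \<circ> h \<circ> p \<in> lcoset (x0 \<circ> p) K \<longleftrightarrow> h \<in> conj_perm p ` K" if h: "h \<in> H" for h
  proof
    assume "x0 \<circ> h \<circ> p \<in> lcoset (x0 \<circ> p) K"
    then obtain k where k: "k \<in> K" "x0 \<circ> (h \<circ> p) = x0 \<circ> (p \<circ> k)"
      by (auto simp: comp_assoc elim: lcoset_memE)
    have "h \<circ> p = p \<circ> k"
      using bijs_comp_cancel[OF x0_bijs _ _ k(2)] perm_group_permutes H K h k(1) p
      by (blast intro: permutes_compose)
    then have "h = conj_perm p k"
      by (metis conj_perm_def comp_assoc comp_id permutes_inv_o(1)[OF p])
    then show "h \<in> conj_perm p ` K" using k(1) by blast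
  next
    assume "h \<in> conj_perm p ` K"
    then obtain k where "k \<in> K" "h = conj_perm p k" by blast
    moreover have "x0 \<circ> conj_perm p k \<circ> p = x0 \<circ> p \<circ> k"
      by (simp add: conj_perm_def comp_assoc permutes_inv_o(2)[OF p])
    ultimately show "x0 \<circ> h \<circ> p \<in> lcoset (x0 \<circ> p) K" by (auto intro: lcoset_memI)
  qed
  then show ?thesis
    unfolding aligned_def lcoset_eq[OF H x0H, symmetric] lcoset_eq[OF K x0K, symmetric]
    by (auto simp: lcoset_def)
qed

lemma pair_dcoset_lcoset:
  assumes H: "perm_group n H" and K: "perm_group n K" and l: "l \<in> bijs n U"
    and q: "q permutes {1..n}"
  shows "pair_dcoset n (lcoset l H) (lcoset (l \<circ> q) K) = double_coset H q K"
proof (intro equalityI subsetI)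
  fix p assume "p \<in> pair_dcoset n (lcoset l H) (lcoset (l \<circ> q) K)"
  then obtain h k where p: "p permutes {1..n}"
    and hk: "h \<in> H" "k \<in> K" "l \<circ> (h \<circ> p) = l \<circ> (q \<circ> k)"
    by (auto simp: pair_dcoset_def aligned_def comp_assoc elim!: lcoset_memE)
  have h: "h permutes {1..n}" and k: "k permutes {1..n}"
    using perm_group_permutes H K hk(1,2) by blast+
  have "h \<circ> p = q \<circ> k"
    using bijs_comp_cancel[OF l _ _ hk(3)] permutes_compose h k p q by blast
  then have "p = inv h \<circ> q \<circ> k"
    by (metis comp_assoc comp_id permutes_inv_o(2)[OF h] id_comp)
  then show "p \<in> double_coset H q K"
    using perm_group_inv[OF H hk(1)] hk(2) by (rule double_coset_memI[rotated -1])
next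
  fix p assume "p \<in> double_coset H q K"
  then obtain a b where ab: "a \<in> H" "b \<in> K" "p = a \<circ> q \<circ> b" by (rule double_coset_memE)
  have a: "a permutes {1..n}" and b: "b permutes {1..n}"
    using perm_group_permutes H K ab(1,2) by blast+
  have "l \<circ> inv a \<circ> p = l \<circ> q \<circ> b"
    using ab(3) by (simp add: comp_assoc permutes_inv_o(2)[OF a])
      (simp add: comp_assoc[symmetric] permutes_inv_o(2)[OF a])
  then have "l \<circ> inv a \<in> aligned (lcoset l H) (lcoset (l \<circ> q) K) p"
    using perm_group_inv[OF H ab(1)] ab(2) by (auto simp: aligned_def intro: lcoset_memI)
  moreover have "p permutes {1..n}" using ab(3) a b q by (simp add: permutes_compose)
  ultimately show "p \<in> pair_dcoset n (lcoset l H) (lcoset (l \<circ> q) K)"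
    by (auto simp: pair_dcoset_def)
qed

lemma pair_dcoset_in_dcosets:
  assumes "perm_group n H" "perm_group n K" "l \<in> bijs n U" "l' \<in> bijs n U"
  shows "pair_dcoset n (lcoset l H) (lcoset l' K) \<in> dcosets n H K"
proof -
  obtain q where "q permutes {1..n}" "l' = l \<circ> q" using bijs_obtain_permutes[OF assms(3,4)] .
  then show ?thesis using pair_dcoset_lcoset[OF assms(1-3)] by (auto simp: dcosets_def)
qed

lemma aligned_relabel:
  assumes s: "inj_on s U" and c: "c \<subseteq> bijs n U" and c': "c' \<subseteq> bijs n U"
    and p: "p permutes {1..n}"
  shows "aligned (relabel n s ` c) (relabel n s ` c') p = relabel n s ` aligned c c' p"
proof (intro equalityI subsetI)
  fix x assume "x \<in> aligned (relabel n s ` c) (relabel n s ` c') p"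
  then obtain l y where l: "l \<in> c" "x = relabel n s l" and y: "y \<in> c'" "x \<circ> p = relabel n s y"
    by (auto simp: aligned_def)
  have "relabel n s (l \<circ> p) = relabel n s y" unfolding relabel_comp[OF p] using l(2) y(2) by simp
  then have "l \<circ> p = y"
    using inj_onD[OF inj_on_relabel[OF s]] bijs_comp_permutes[OF _ p] l(1) y(1) c c' by blast
  then show "x \<in> relabel n s ` aligned c c' p" using l y by (auto simp: aligned_def)
qed (auto simp: aligned_def relabel_comp[OF p, symmetric])

lemma pair_dcoset_relabel:
  assumes "inj_on s U" "c \<subseteq> bijs n U" "c' \<subseteq> bijs n U"
  shows "pair_dcoset n (relabel n s ` c) (relabel n s ` c') = pair_dcoset n c c'"
  using aligned_relabel[OF assms] by (auto simp: pair_dcoset_def)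

lemma double_coset_permutes:
  assumes "perm_group n H" "perm_group n K" "p permutes {1..n}" "q \<in> double_coset H p K"
  shows "q permutes {1..n}"
proof -
  obtain a b where "a \<in> H" "b \<in> K" "q = a \<circ> p \<circ> b" using assms(4) by (rule double_coset_memE)
  then show ?thesis
    using assms(1-3) by (metis permutes_compose perm_group_permutes)
qed

definition dcoset_rep :: "(nat \<Rightarrow> nat) set \<Rightarrow> nat \<Rightarrow> nat" where
  "dcoset_rep D = (SOME p. p \<in> D)"

lemma dcoset_rep:
  assumes H: "perm_group n H" and K: "perm_group n K" and D: "D \<in> dcosets n H K"
  shows "dcoset_rep D \<in> D" and "dcoset_rep D permutes {1..n}"
    and "D = double_coset H (dcoset_rep D) K"
proof -
  obtain p where p: "p permutes {1..n}" "D = double_coset H p K" using D by (auto simp: dcosets_def)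
  then show rep: "dcoset_rep D \<in> D"
    unfolding dcoset_rep_def using self_in_double_coset[OF H K] by (metis someI_ex)
  show "dcoset_rep D permutes {1..n}" using double_coset_permutes[OF H K p(1)] rep p(2) by blast
  show "D = double_coset H (dcoset_rep D) K" using double_coset_eq[OF H K] rep p(2) by blast
qed

definition dcoset_conj :: "nat \<Rightarrow> nat list \<Rightarrow> nat list \<Rightarrow> (nat \<Rightarrow> nat) set \<Rightarrow> nat \<Rightarrow> nat" where
  "dcoset_conj n alpha beta D = (SOME g. g permutes {1..n} \<and>
     std_group alpha \<inter> conj_perm (dcoset_rep D) ` std_group beta
       = conj_perm g ` std_group (dcoset_type n alpha beta D))"

lemma dcoset_conj:
  assumes alpha: "alpha \<in> partitions n" and beta: "beta \<in> partitions n"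
    and D: "D \<in> dcosets n (std_group alpha) (std_group beta)"
  shows "dcoset_conj n alpha beta D permutes {1..n}"
    and "std_group alpha \<inter> conj_perm (dcoset_rep D) ` std_group beta
           = conj_perm (dcoset_conj n alpha beta D) ` std_group (dcoset_type n alpha beta D)"
proof -
  have "dcoset_rep D \<in> D"
    using dcoset_rep(1)[OF perm_group_std_group[OF alpha] perm_group_std_group[OF beta] D] .
  then obtain g where "g permutes {1..n}" "std_group alpha \<inter> conj_perm (dcoset_rep D) ` std_group beta
      = conj_perm g ` std_group (dcoset_type n alpha beta D)"
    using typed_dcoset_stabilizer[OF alpha beta dcoset_type(2)[OF alpha beta D]] by blast
  then have "\<exists>g. g permutes {1..n} \<and> std_group alpha \<inter> conj_perm (dcoset_rep D) ` std_group beta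
      = conj_perm g ` std_group (dcoset_type n alpha beta D)" by blast
  then show "dcoset_conj n alpha beta D permutes {1..n}"
    and "std_group alpha \<inter> conj_perm (dcoset_rep D) ` std_group beta
           = conj_perm (dcoset_conj n alpha beta D) ` std_group (dcoset_type n alpha beta D)"
    unfolding dcoset_conj_def by (metis (mono_tags, lifting) someI_ex)+
qed

text \<open>The aligned labellings form a coset of \<open>H \<inter> p K p\<inverse> = g \<langle>\<sigma>\<^sub>\<mu>\<rangle> g\<inverse>\<close>
  (lemma \<open>aligned_lcoset\<close>); composing with \<open>g\<close> turns it into a structure of \<open>C\<^sub>\<mu>\<close>.\<close>
definition product_structure ::
    "nat \<Rightarrow> nat list \<Rightarrow> nat list \<Rightarrow> (nat \<Rightarrow> 'a) set \<Rightarrow> (nat \<Rightarrow> 'a) set \<Rightarrow> (nat \<Rightarrow> 'a) set" where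
  "product_structure n alpha beta c c' =
     (let D = pair_dcoset n c c' in
      (\<lambda>x. x \<circ> dcoset_conj n alpha beta D) ` aligned c c' (dcoset_rep D))"

lemma comp_image_lcoset_conj_perm:
  assumes g: "g permutes S"
  shows "(\<lambda>x. x \<circ> g) ` lcoset l (conj_perm g ` M) = lcoset (l \<circ> g) M"
proof -
  have "l \<circ> conj_perm g m \<circ> g = l \<circ> g \<circ> m" for m
    by (simp add: conj_perm_def comp_assoc permutes_inv_o(2)[OF g])
  then show ?thesis by (simp add: lcoset_def image_image comp_assoc)
qed

lemma product_structure_lcoset:
  assumes alpha: "alpha \<in> partitions n" and beta: "beta \<in> partitions n"
    and l: "l \<in> bijs n U" and l': "l' \<in> bijs n U"
  defines "c \<equiv> lcoset l (std_group alpha)" and "c' \<equiv> lcoset l' (std_group beta)"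
  defines "D \<equiv> pair_dcoset n c c'"
  assumes x0: "x0 \<in> aligned c c' (dcoset_rep D)"
  shows "product_structure n alpha beta c c'
           = lcoset (x0 \<circ> dcoset_conj n alpha beta D) (std_group (dcoset_type n alpha beta D))"
proof -
  have H: "perm_group n (std_group alpha)" and K: "perm_group n (std_group beta)"
    using alpha beta by (auto intro: perm_group_std_group)
  have D: "D \<in> dcosets n (std_group alpha) (std_group beta)"
    unfolding D_def c_def c'_def using pair_dcoset_in_dcosets[OF H K l l'] .
  show ?thesis
    unfolding product_structure_def Let_def D_def[symmetric]
      aligned_lcoset[OF H K l dcoset_rep(2)[OF H K D] x0[unfolded c_def c'_def], folded c_def c'_def]
      dcoset_conj(2)[OF alpha beta D]
    by (rule comp_image_lcoset_conj_perm[OF dcoset_conj(1)[OF alpha beta D]])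
qed

lemma finite_partitions: "finite (partitions n)"
proof (rule finite_subset[OF _ finite_lists_length_le[of "{0..n}" n]])
  have "length xs \<le> sum_list xs" if "\<forall>m\<in>set xs. 0 < m" for xs :: "nat list"
    using that by (induction xs) auto
  then show "partitions n \<subseteq> {xs. set xs \<subseteq> {0..n} \<and> length xs \<le> n}"
    using member_le_sum_list by (fastforce simp: partitions_def)
qed simp

definition summand_index :: "nat \<Rightarrow> (nat list \<Rightarrow> nat) \<Rightarrow> (nat list \<Rightarrow> nat) \<Rightarrow> nat list
    \<Rightarrow> (nat list \<times> nat \<times> nat list \<times> nat \<times> (nat \<Rightarrow> nat) set) set" where
  "summand_index n a b mu = (SIGMA alpha:partitions n. SIGMA i:{..<a alpha}.
     SIGMA beta:partitions n. SIGMA j:{..<b beta}. typed_dcosets n mu alpha beta)"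

definition prod_coeff :: "nat \<Rightarrow> (nat list \<Rightarrow> nat) \<Rightarrow> (nat list \<Rightarrow> nat) \<Rightarrow> nat list \<Rightarrow> nat" where
  "prod_coeff n a b mu =
     (\<Sum>alpha\<in>partitions n. \<Sum>beta\<in>partitions n. a alpha * b beta * bcoef n mu alpha beta)"

lemma finite_summand_index: "finite (summand_index n a b mu)"
  by (simp add: summand_index_def finite_partitions finite_typed_dcosets finite_SigmaI)

lemma card_summand_index: "card (summand_index n a b mu) = prod_coeff n a b mu"
  by (simp add: summand_index_def prod_coeff_def card_SigmaI finite_partitions finite_typed_dcosets
      finite_SigmaI bcoef_eq_card sum_distrib_left mult.assoc)

definition copy_index :: "nat \<Rightarrow> (nat list \<Rightarrow> nat) \<Rightarrow> (nat list \<Rightarrow> nat) \<Rightarrow> nat list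
    \<Rightarrow> nat list \<times> nat \<times> nat list \<times> nat \<times> (nat \<Rightarrow> nat) set \<Rightarrow> nat" where
  "copy_index n a b mu = (SOME h. bij_betw h (summand_index n a b mu) {..<prod_coeff n a b mu})"

lemma bij_betw_copy_index:
  "bij_betw (copy_index n a b mu) (summand_index n a b mu) {..<prod_coeff n a b mu}"
proof -
  have "\<exists>h. bij_betw h (summand_index n a b mu) {..<prod_coeff n a b mu}"
    using ex_bij_betw_finite_nat[OF finite_summand_index]
    by (simp add: card_summand_index atLeast0LessThan)
  then show ?thesis unfolding copy_index_def by (rule someI_ex)
qed

definition prod_iso :: "nat \<Rightarrow> (nat list \<Rightarrow> nat) \<Rightarrow> (nat list \<Rightarrow> nat) \<Rightarrow>
    (nat list \<times> nat \<times> (nat \<Rightarrow> 'a) set) \<times> (nat list \<times> nat \<times> (nat \<Rightarrow> 'a) set)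
    \<Rightarrow> nat list \<times> nat \<times> (nat \<Rightarrow> 'a) set" where
  "prod_iso n a b = (\<lambda>((alpha, i, c), (beta, j, c')).
     let D = pair_dcoset n c c'; mu = dcoset_type n alpha beta D
     in (mu, copy_index n a b mu (alpha, i, beta, j, D), product_structure n alpha beta c c'))"

lemma prod_iso_apply:
  "prod_iso n a b ((alpha, i, c), (beta, j, c')) =
     (dcoset_type n alpha beta (pair_dcoset n c c'),
      copy_index n a b (dcoset_type n alpha beta (pair_dcoset n c c')) (alpha, i, beta, j, pair_dcoset n c c'),
      product_structure n alpha beta c c')"
  by (simp add: prod_iso_def Let_def)

lemma CEsp_iff: "x \<in> CEsp n a U \<longleftrightarrow>
    (\<exists>alpha i l. x = (alpha, i, lcoset l (std_group alpha)) \<and>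
       alpha \<in> partitions n \<and> i < a alpha \<and> l \<in> bijs n U)"
  by (auto simp: CEsp_def C_sp_eq)

lemma CEsp_times_CEsp_E:
  assumes "x \<in> CEsp n a U \<times> CEsp n b U"
  obtains alpha i l beta j l'
  where "x = ((alpha, i, lcoset l (std_group alpha)), (beta, j, lcoset l' (std_group beta)))"
    "alpha \<in> partitions n" "i < a alpha" "l \<in> bijs n U"
    "beta \<in> partitions n" "j < b beta" "l' \<in> bijs n U"
  using assms unfolding mem_Times_iff CEsp_iff by (metis prod.collapse)

lemma pair_dcoset_rep_aligned:
  assumes H: "perm_group n H" and K: "perm_group n K" and l: "l \<in> bijs n U" and l': "l' \<in> bijs n U"
  defines "D \<equiv> pair_dcoset n (lcoset l H) (lcoset l' K)"
  shows "D \<in> dcosets n H K" and "aligned (lcoset l H) (lcoset l' K) (dcoset_rep D) \<noteq> {}"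
proof -
  show D: "D \<in> dcosets n H K" unfolding D_def using pair_dcoset_in_dcosets[OF H K l l'] .
  show "aligned (lcoset l H) (lcoset l' K) (dcoset_rep D) \<noteq> {}"
    using dcoset_rep(1)[OF H K D] by (simp add: D_def pair_dcoset_def)
qed

lemma product_structure_eqD:
  assumes alpha: "alpha \<in> partitions n" and beta: "beta \<in> partitions n"
    and l: "l \<in> bijs n U" and l': "l' \<in> bijs n U"
  defines "c \<equiv> lcoset l (std_group alpha)" and "c' \<equiv> lcoset l' (std_group beta)"
  assumes D: "pair_dcoset n d d' = pair_dcoset n c c'"
    and eq: "product_structure n alpha beta c c' = product_structure n alpha beta d d'"
    and d: "d = lcoset m (std_group alpha)" and d': "d' = lcoset m' (std_group beta)"
  shows "c = d" and "c' = d'"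
proof -
  have H: "perm_group n (std_group alpha)" and K: "perm_group n (std_group beta)"
    using alpha beta by (auto intro: perm_group_std_group)
  let ?D = "pair_dcoset n c c'"
  let ?g = "dcoset_conj n alpha beta ?D"
  have Dc: "?D \<in> dcosets n (std_group alpha) (std_group beta)"
    and "aligned c c' (dcoset_rep ?D) \<noteq> {}"
    using pair_dcoset_rep_aligned[OF H K l l'] by (simp_all add: c_def c'_def)
  then obtain x0 where x0: "x0 \<in> aligned c c' (dcoset_rep ?D)" by blast
  have "inj (\<lambda>x. x \<circ> ?g)"
    using permutes_inv_o(1)[OF dcoset_conj(1)[OF alpha beta Dc]]
    by (metis (no_types, lifting) comp_assoc comp_id injI)
  moreover have "(\<lambda>x. x \<circ> ?g) ` aligned c c' (dcoset_rep ?D)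
      = (\<lambda>x. x \<circ> ?g) ` aligned d d' (dcoset_rep ?D)"
    using eq D by (simp add: product_structure_def Let_def)
  ultimately have "aligned c c' (dcoset_rep ?D) = aligned d d' (dcoset_rep ?D)"
    by (metis inj_image_eq_iff)
  with x0 have "x0 \<in> c" "x0 \<in> d" "x0 \<circ> dcoset_rep ?D \<in> c'" "x0 \<circ> dcoset_rep ?D \<in> d'"
    by (auto simp: aligned_def)
  then show "c = d" "c' = d'"
    unfolding c_def c'_def d d' using lcoset_eqI[OF H] lcoset_eqI[OF K] by blast+
qed

lemma prod_iso_in_CEsp:
  assumes x: "x \<in> CEsp n a U \<times> CEsp n b U"
  shows "prod_iso n a b x \<in> CEsp n (prod_coeff n a b) U"
proof -
  obtain alpha i l beta j l'
    where x_eq: "x = ((alpha, i, lcoset l (std_group alpha)), (beta, j, lcoset l' (std_group beta)))"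
    and alpha: "alpha \<in> partitions n" "i < a alpha" "l \<in> bijs n U"
    and beta: "beta \<in> partitions n" "j < b beta" "l' \<in> bijs n U"
    using x by (rule CEsp_times_CEsp_E)
  have H: "perm_group n (std_group alpha)" and K: "perm_group n (std_group beta)"
    using alpha beta by (auto intro: perm_group_std_group)
  let ?c = "lcoset l (std_group alpha)" and ?c' = "lcoset l' (std_group beta)"
  let ?D = "pair_dcoset n ?c ?c'"
  let ?mu = "dcoset_type n alpha beta ?D"
  have D: "?D \<in> dcosets n (std_group alpha) (std_group beta)"
    and "aligned ?c ?c' (dcoset_rep ?D) \<noteq> {}"
    using pair_dcoset_rep_aligned[OF H K alpha(3) beta(3)] by simp_all
  then obtain x0 where x0: "x0 \<in> aligned ?c ?c' (dcoset_rep ?D)" by blast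
  have "(alpha, i, beta, j, ?D) \<in> summand_index n a b ?mu"
    using alpha beta dcoset_type(2)[OF alpha(1) beta(1) D] by (simp add: summand_index_def)
  then have "copy_index n a b ?mu (alpha, i, beta, j, ?D) < prod_coeff n a b ?mu"
    using bij_betwE[OF bij_betw_copy_index] by blast
  moreover have "x0 \<circ> dcoset_conj n alpha beta ?D \<in> bijs n U"
    using x0 lcoset_subset_bijs[OF H alpha(3)] dcoset_conj(1)[OF alpha(1) beta(1) D]
    by (auto simp: aligned_def intro: bijs_comp_permutes)
  ultimately show ?thesis
    unfolding x_eq prod_iso_apply product_structure_lcoset[OF alpha(1) beta(1) alpha(3) beta(3) x0]
      CEsp_iff
    using dcoset_type(1)[OF alpha(1) beta(1) D] by blast
qed

lemma inj_on_prod_iso: "inj_on (prod_iso n a b) (CEsp n a U \<times> CEsp n b U)"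
proof (rule inj_onI)
  fix x y assume x: "x \<in> CEsp n a U \<times> CEsp n b U" and y: "y \<in> CEsp n a U \<times> CEsp n b U"
    and eq: "prod_iso n a b x = prod_iso n a b y"
  obtain alpha i l beta j l'
    where x_eq: "x = ((alpha, i, lcoset l (std_group alpha)), (beta, j, lcoset l' (std_group beta)))"
    and alpha: "alpha \<in> partitions n" "i < a alpha" "l \<in> bijs n U"
    and beta: "beta \<in> partitions n" "j < b beta" "l' \<in> bijs n U"
    using x by (rule CEsp_times_CEsp_E)
  obtain alpha2 i2 m beta2 j2 m'
    where y_eq: "y = ((alpha2, i2, lcoset m (std_group alpha2)), (beta2, j2, lcoset m' (std_group beta2)))"
    and alpha2: "alpha2 \<in> partitions n" "i2 < a alpha2" "m \<in> bijs n U"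
    and beta2: "beta2 \<in> partitions n" "j2 < b beta2" "m' \<in> bijs n U"
    using y by (rule CEsp_times_CEsp_E)
  let ?c = "lcoset l (std_group alpha)" and ?c' = "lcoset l' (std_group beta)"
  let ?d = "lcoset m (std_group alpha2)" and ?d' = "lcoset m' (std_group beta2)"
  let ?D = "pair_dcoset n ?c ?c'" and ?D2 = "pair_dcoset n ?d ?d'"
  let ?mu = "dcoset_type n alpha beta ?D"
  have mu_eq: "dcoset_type n alpha2 beta2 ?D2 = ?mu" and
    idx_eq: "copy_index n a b ?mu (alpha, i, beta, j, ?D) = copy_index n a b ?mu (alpha2, i2, beta2, j2, ?D2)"
    using eq by (auto simp: x_eq y_eq prod_iso_apply)
  have D: "?D \<in> dcosets n (std_group alpha) (std_group beta)"
    using pair_dcoset_rep_aligned(1)[OF perm_group_std_group[OF alpha(1)]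
        perm_group_std_group[OF beta(1)] alpha(3) beta(3)] .
  have D2: "?D2 \<in> dcosets n (std_group alpha2) (std_group beta2)"
    using pair_dcoset_rep_aligned(1)[OF perm_group_std_group[OF alpha2(1)]
        perm_group_std_group[OF beta2(1)] alpha2(3) beta2(3)] .
  have "(alpha, i, beta, j, ?D) \<in> summand_index n a b ?mu"
    using alpha beta dcoset_type(2)[OF alpha(1) beta(1) D] by (simp add: summand_index_def)
  moreover have "(alpha2, i2, beta2, j2, ?D2) \<in> summand_index n a b ?mu"
    using alpha2 beta2 dcoset_type(2)[OF alpha2(1) beta2(1) D2] mu_eq
    by (simp add: summand_index_def)
  ultimately have "(alpha, i, beta, j, ?D) = (alpha2, i2, beta2, j2, ?D2)"
    using inj_onD[OF bij_betw_imp_inj_on[OF bij_betw_copy_index] idx_eq] by blast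
  then have same: "alpha2 = alpha" "i2 = i" "beta2 = beta" "j2 = j" "?D2 = ?D" by auto
  then have "product_structure n alpha beta ?c ?c' = product_structure n alpha beta ?d ?d'"
    using eq by (simp add: x_eq y_eq prod_iso_apply)
  then have "?c = ?d" "?c' = ?d'"
    using product_structure_eqD[OF alpha(1) beta(1) alpha(3) beta(3)] same by auto
  then show "x = y" using x_eq y_eq same by simp
qed

lemma prod_iso_surj:
  assumes y: "y \<in> CEsp n (prod_coeff n a b) U"
  shows "y \<in> prod_iso n a b ` (CEsp n a U \<times> CEsp n b U)"
proof -
  obtain mu k m where y_eq: "y = (mu, k, lcoset m (std_group mu))" and mu: "mu \<in> partitions n"
    and k: "k < prod_coeff n a b mu" and m: "m \<in> bijs n U"
    using y unfolding CEsp_iff by auto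
  obtain alpha i beta j D where t: "k = copy_index n a b mu (alpha, i, beta, j, D)"
    and alpha: "alpha \<in> partitions n" "i < a alpha" and beta: "beta \<in> partitions n" "j < b beta"
    and D_mu: "D \<in> typed_dcosets n mu alpha beta"
  proof -
    have "k \<in> copy_index n a b mu ` summand_index n a b mu"
      using k bij_betw_imp_surj_on[OF bij_betw_copy_index, of n a b mu] by simp
    then obtain t where "t \<in> summand_index n a b mu" "k = copy_index n a b mu t" by blast
    with that show ?thesis by (auto simp: summand_index_def)
  qed
  have H: "perm_group n (std_group alpha)" and K: "perm_group n (std_group beta)"
    using alpha beta by (auto intro: perm_group_std_group)
  have D: "D \<in> dcosets n (std_group alpha) (std_group beta)"
    using D_mu typed_dcosets_subset by blast
  have type: "dcoset_type n alpha beta D = mu" using dcoset_type_eq[OF alpha(1) beta(1) mu D_mu] .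
  let ?p = "dcoset_rep D" and ?g = "dcoset_conj n alpha beta D"
  have p: "?p permutes {1..n}" using dcoset_rep(2)[OF H K D] .
  have g: "?g permutes {1..n}" using dcoset_conj(1)[OF alpha(1) beta(1) D] .
  define l where "l = m \<circ> inv ?g"
  have l: "l \<in> bijs n U" unfolding l_def by (rule bijs_comp_permutes[OF m permutes_inv[OF g]])
  let ?c = "lcoset l (std_group alpha)" and ?c' = "lcoset (l \<circ> ?p) (std_group beta)"
  have pair: "pair_dcoset n ?c ?c' = D"
    using pair_dcoset_lcoset[OF H K l p] dcoset_rep(3)[OF H K D] by simp
  have "l \<in> aligned ?c ?c' (dcoset_rep (pair_dcoset n ?c ?c'))"
    unfolding aligned_def pair using self_in_lcoset[OF H, of l] self_in_lcoset[OF K, of "l \<circ> ?p"]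
    by blast
  from product_structure_lcoset[OF alpha(1) beta(1) l bijs_comp_permutes[OF l p] this]
  have "product_structure n alpha beta ?c ?c' = lcoset (l \<circ> ?g) (std_group mu)"
    unfolding pair type .
  also have "l \<circ> ?g = m" by (simp add: l_def comp_assoc permutes_inv_o(2)[OF g])
  finally have "prod_iso n a b ((alpha, i, ?c), (beta, j, ?c')) = y"
    unfolding prod_iso_apply pair type y_eq t by (simp only:)
  moreover have "((alpha, i, ?c), (beta, j, ?c')) \<in> CEsp n a U \<times> CEsp n b U"
    using alpha beta l bijs_comp_permutes[OF l p] unfolding mem_Times_iff CEsp_iff by auto
  ultimately show ?thesis by blast
qed

lemma prod_iso_transport:
  assumes s: "bij_betw s U V" and x: "x \<in> CEsp n a U \<times> CEsp n b U"
  shows "prod_iso n a b (prod_transport (CEsp_transport n) (CEsp_transport n) s x)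
           = CEsp_transport n s (prod_iso n a b x)"
proof -
  obtain alpha i l beta j l'
    where x_eq: "x = ((alpha, i, lcoset l (std_group alpha)), (beta, j, lcoset l' (std_group beta)))"
    and alpha: "alpha \<in> partitions n" "l \<in> bijs n U"
    and beta: "beta \<in> partitions n" "l' \<in> bijs n U"
    using x by (rule CEsp_times_CEsp_E)
  have H: "perm_group n (std_group alpha)" and K: "perm_group n (std_group beta)"
    using alpha beta by (auto intro: perm_group_std_group)
  let ?c = "lcoset l (std_group alpha)" and ?c' = "lcoset l' (std_group beta)"
  let ?r = "relabel n s"
  have inj: "inj_on s U" using s by (rule bij_betw_imp_inj_on)
  have cs: "?c \<subseteq> bijs n U" "?c' \<subseteq> bijs n U"
    using lcoset_subset_bijs[OF H alpha(2)] lcoset_subset_bijs[OF K beta(2)] .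
  let ?D = "pair_dcoset n ?c ?c'"
  have D: "?D \<in> dcosets n (std_group alpha) (std_group beta)"
    using pair_dcoset_in_dcosets[OF H K alpha(2) beta(2)] .
  have pair: "pair_dcoset n (?r ` ?c) (?r ` ?c') = ?D" using pair_dcoset_relabel[OF inj cs] .
  have "product_structure n alpha beta (?r ` ?c) (?r ` ?c')
      = (\<lambda>x. x \<circ> dcoset_conj n alpha beta ?D) ` ?r ` aligned ?c ?c' (dcoset_rep ?D)"
    unfolding product_structure_def Let_def pair aligned_relabel[OF inj cs dcoset_rep(2)[OF H K D]] ..
  also have "\<dots> = ?r ` product_structure n alpha beta ?c ?c'"
    unfolding product_structure_def Let_def image_image
    by (rule image_cong[OF refl], rule relabel_comp[symmetric, OF dcoset_conj(1)[OF alpha(1) beta(1) D]])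
  finally show ?thesis
    by (simp add: x_eq prod_transport_def CEsp_transport_def prod_iso_apply pair quot_transport_eq)
qed

lemma species_iso_prod_CEsp:
  "species_iso (prod_species (CEsp n a) (CEsp n b)) (prod_transport (CEsp_transport n) (CEsp_transport n))
     (CEsp n (prod_coeff n a b)) (CEsp_transport n)"
  unfolding species_iso_def prod_species_def
proof (intro exI[of _ "\<lambda>U. prod_iso n a b"] conjI allI impI ballI)
  fix U :: "'a set"
  show "bij_betw (prod_iso n a b) (CEsp n a U \<times> CEsp n b U) (CEsp n (prod_coeff n a b) U)"
    unfolding bij_betw_def using inj_on_prod_iso prod_iso_in_CEsp prod_iso_surj by blast
next
  fix U V :: "'a set" and s x
  assume "finite U \<and> bij_betw s U V" and "x \<in> CEsp n a U \<times> CEsp n b U"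
  then show "prod_iso n a b (prod_transport (CEsp_transport n) (CEsp_transport n) s x)
      = CEsp_transport n s (prod_iso n a b x)"
    using prod_iso_transport by blast
qed

theorem mainTheorem11:
  fixes n :: nat and a b :: "nat list \<Rightarrow> nat"
  shows "species_iso
           (prod_species (CEsp n a) (CEsp n b) :: 'a set \<Rightarrow> _)
           (prod_transport (CEsp_transport n) (CEsp_transport n))
           (CEsp n (\<lambda>mu. \<Sum>alpha\<in>partitions n. \<Sum>beta\<in>partitions n.
                           a alpha * b beta * bcoef n mu alpha beta))
           (CEsp_transport n)"
  using species_iso_prod_CEsp[of n a b] unfolding prod_coeff_def[abs_def] .

end
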